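(* Let $T$ be a hypercyclic bounded operator on a separable Banach space $X$ with $c(T)>0$. Then there is a comeager set of vectors $x\in X$ such that $\|T^ix\|\to0$ as $i\to\infty$ along some set $D_x\subset\mathbb N$ with $\overline{\mathrm{dens}}(D_x)\ge c(T)$.
   Context: $HC(T)$ is the set of vectors with dense $T$-orbit. $\mathcal N_T(x,B)=\{i\in\mathbb N:T^ix\in B\}$; $\overline{\mathrm{dens}}(D)=\limsup_N\frac1N\#(D\cap[1,N])$; $B_R$ is the closed ball of radius $R$ centred at $0$. $c(T)=\sup_{R>0}\sup_{x\in HC(T)}\overline{\mathrm{dens}}\,\mathcal N_T(x,B_R)$. *)

theory Defs
  imports "HOL-Analysis.Analysis" "HOL-Library.Extended_Real"
begin

definition HC :: "('a::real_normed_vector \<Rightarrow> 'a) \<Rightarrow> 'a set" where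
  "HC T = {x. closure (range (\<lambda>n. (T ^^ n) x)) = UNIV}"

definition hypercyclic :: "('a::real_normed_vector \<Rightarrow> 'a) \<Rightarrow> bool" where
  "hypercyclic T \<longleftrightarrow> HC T \<noteq> {}"

definition return_set :: "('a \<Rightarrow> 'a) \<Rightarrow> 'a \<Rightarrow> 'a set \<Rightarrow> nat set" where
  "return_set T x B = {i. 1 \<le> i \<and> (T ^^ i) x \<in> B}"

definition upper_dens :: "nat set \<Rightarrow> ereal" where
  "upper_dens D = limsup (\<lambda>N. ereal (real (card (D \<inter> {1..N})) / real N))"

definition c_const :: "('a::real_normed_vector \<Rightarrow> 'a) \<Rightarrow> ereal" where
  "c_const T = (SUP R \<in> {R::real. R > 0}. SUP x \<in> HC T. upper_dens (return_set T x (cball 0 R)))"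

definition comeager :: "'a::topological_space set \<Rightarrow> bool" where
  "comeager G \<longleftrightarrow> (\<exists>\<F>. countable \<F> \<and> (\<forall>U\<in>\<F>. open U \<and> closure U = UNIV) \<and> \<Inter>\<F> \<subseteq> G)"

end

theory Submission
  imports Defs
begin

(* Write c = c(T) (a real number in (0,1]) and, for e > 0, r and M, let
   frequently_small T r e M be the set of vectors x whose orbit, on some initial segment
   [1,N] with N >= M, visits the open ball B(0,e) more than r*N times.
   (1) Each such set is open, because T is continuous and only finitely many iterates matter
       for a fixed N.
   (2) For e <= 1 the set U(e,M) = frequently_small T (c - e) e M is dense: pick R > 0 and a
       hypercyclic x0 whose return set to B_R has upper density > c - e/2; then every vector
       y = (e/(2R)) T^m x0 lies in U(e,M), because the returns of x0 to B_R after time m are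
       returns of y to B(0,e/2), and the first m returns are negligible in density.  The
       vectors y are dense since a scaled dense orbit is dense.
   (3) Hence the intersection G of all U(1/(k+1),M) is comeager.
   (4) For x in G a diagonal argument glues, along a fast-growing sequence of checkpoints,
       the sets of times where |T^i x| < 1/(k+1) into one set D of upper density >= c along
       which T^i x tends to 0. *)

lemma funpow_scaleR:
  fixes T :: "'a::real_vector \<Rightarrow> 'a"
  assumes "linear T"
  shows "(T ^^ n) (a *\<^sub>R x) = a *\<^sub>R (T ^^ n) x"
  by (induction n) (auto simp: linear_cmul[OF assms])

lemma continuous_on_funpow:
  fixes T :: "'a::real_normed_vector \<Rightarrow> 'a"
  assumes "bounded_linear T"
  shows "continuous_on UNIV (T ^^ n)"
proof (induction n)
  case 0 then show ?case by (simp add: continuous_on_id)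
next
  case (Suc n)
  have "continuous_on UNIV (T \<circ> (T ^^ n))"
    by (rule continuous_on_compose[OF Suc]) (use linear_continuous_on[OF assms] in simp)
  then show ?case by simp
qed

(* Upper densities never exceed 1; in particular c(T) <= 1 is a real number. *)
lemma upper_dens_le_one: "upper_dens D \<le> 1"
  unfolding upper_dens_def
proof (rule Limsup_bounded, rule always_eventually, rule allI)
  fix N :: nat
  have "card (D \<inter> {1..N}) \<le> card {1..N}" by (rule card_mono) auto
  then have "real (card (D \<inter> {1..N})) \<le> real N" by simp
  then show "ereal (real (card (D \<inter> {1..N})) / real N) \<le> 1"
    by (cases "N = 0") (auto simp: divide_le_eq_1)
qed

lemma less_limsup_frequently:
  fixes X :: "nat \<Rightarrow> ereal"
  assumes "a < limsup X"
  shows "\<exists>n\<ge>M. a < X n"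
proof -
  have "\<not> eventually (\<lambda>n. X n \<le> a) sequentially"
    using Limsup_bounded[of X a sequentially] assms by auto
  then show ?thesis by (simp add: not_eventually not_le frequently_sequentially)
qed

lemma card_initial_le_prefix:
  assumes "A \<inter> {n<..P} \<subseteq> D"
  shows "card (A \<inter> {1..P}) \<le> n + card (D \<inter> {1..P})"
proof -
  have "A \<inter> {1..P} \<subseteq> {1..n} \<union> (D \<inter> {1..P})" using assms by auto
  then have "card (A \<inter> {1..P}) \<le> card ({1..n} \<union> (D \<inter> {1..P}))"
    by (intro card_mono) auto
  also have "\<dots> \<le> n + card (D \<inter> {1..P})"
    using card_Un_le[of "{1..n}" "D \<inter> {1..P}"] by simp
  finally show ?thesis .
qed

lemma upper_dens_ge_along_subseq:
  assumes "strict_mono s" and "a \<longlonglongrightarrow> c"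
    and "\<And>k. a k \<le> real (card (D \<inter> {1..s k})) / real (s k)"
  shows "ereal c \<le> upper_dens D"
proof -
  define X where "X = (\<lambda>N. ereal (real (card (D \<inter> {1..N})) / real N))"
  have "ereal c = limsup (\<lambda>k. ereal (a k))"
    using assms(2) by (intro lim_imp_Limsup[symmetric]) auto
  also have "\<dots> \<le> limsup (X \<circ> s)"
    using assms(3) by (intro Limsup_mono always_eventually) (simp add: X_def)
  also have "\<dots> \<le> limsup X"
    using assms(1) by (intro limsup_subseq_mono) (simp add: strict_mono_def)
  finally show ?thesis unfolding upper_dens_def X_def .
qed

lemma finite_diff_blocks:
  fixes A :: "nat \<Rightarrow> nat set"
  assumes "\<And>k. A (Suc k) \<subseteq> A k" and "strict_mono Ns"
  shows "finite ((\<Union>k. A k \<inter> {Ns k<..Ns (Suc k)}) - A j)"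
proof (rule finite_subset[of _ "{..Ns j}"])
  show "(\<Union>k. A k \<inter> {Ns k<..Ns (Suc k)}) - A j \<subseteq> {..Ns j}"
  proof
    fix i assume "i \<in> (\<Union>k. A k \<inter> {Ns k<..Ns (Suc k)}) - A j"
    then obtain k where k: "i \<in> A k" "i \<le> Ns (Suc k)" "i \<notin> A j" by auto
    have "k < j"
    proof (rule ccontr)
      assume "\<not> k < j"
      then have "A k \<subseteq> A j" using lift_Suc_antimono_le[of A, OF assms(1)] by simp
      then show False using k by auto
    qed
    then have "Ns (Suc k) \<le> Ns j" using assms(2) by (simp add: strict_mono_less_eq)
    then show "i \<in> {..Ns j}" using k by auto
  qed
qed simp

(* The checkpoints grow so fast that the earlier blocks are negligible. *)
lemma diagonal_density:
  fixes A :: "nat \<Rightarrow> nat set" and c :: real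
  assumes decr: "\<And>k. A (Suc k) \<subseteq> A k"
    and freq: "\<And>k M. \<exists>N\<ge>M. (c - 1 / (real k + 1)) * real N < real (card (A k \<inter> {1..N}))"
  shows "\<exists>D. ereal c \<le> upper_dens D \<and> (\<forall>k. finite (D - A k))"
proof -
  obtain f where f: "\<And>k M. f k M \<ge> M"
    "\<And>k M. (c - 1 / (real k + 1)) * real (f k M) < real (card (A k \<inter> {1..f k M}))"
  proof -
    have "\<forall>k M. \<exists>N. M \<le> N \<and>
            (c - 1 / (real k + 1)) * real N < real (card (A k \<inter> {1..N}))"
      using freq by blast
    then show thesis using that by metis
  qed
  define Ns where "Ns = rec_nat 0 (\<lambda>k n. f k ((k + 1) * (n + 1)))"
  have Ns_Suc: "Ns (Suc k) = f k ((k + 1) * (Ns k + 1))" for k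
    by (simp add: Ns_def)
  have growth: "(k + 1) * (Ns k + 1) \<le> Ns (Suc k)" for k
    using f(1) by (simp add: Ns_Suc)
  have "Ns k < Ns (Suc k)" for k
  proof -
    have "Ns k < (k + 1) * (Ns k + 1)" by simp
    then show ?thesis using growth[of k] by linarith
  qed
  then have Ns_mono: "strict_mono Ns" by (simp add: strict_mono_Suc_iff)
  define D where "D = (\<Union>k. A k \<inter> {Ns k<..Ns (Suc k)})"
  have low: "c - 2 / (real k + 1) \<le> real (card (D \<inter> {1..Ns (Suc k)})) / real (Ns (Suc k))" for k
  proof -
    let ?P = "Ns (Suc k)"
    have "card (A k \<inter> {1..?P}) \<le> Ns k + card (D \<inter> {1..?P})"
      by (rule card_initial_le_prefix) (auto simp: D_def)
    moreover have "(c - 1 / (real k + 1)) * real ?P < real (card (A k \<inter> {1..?P}))"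
      using f(2) by (simp add: Ns_Suc)
    moreover have "real (Ns k) \<le> real ?P / (real k + 1)"
    proof -
      have "real ((k + 1) * (Ns k + 1)) \<le> real ?P"
        using growth[of k] by (simp only: of_nat_le_iff)
      then show ?thesis by (simp add: field_simps)
    qed
    moreover have "(c - 2 / (real k + 1)) * real ?P
                     = (c - 1 / (real k + 1)) * real ?P - real ?P / (real k + 1)"
      by (simp add: algebra_simps add_divide_distrib[symmetric, of 1 1, simplified])
    ultimately have "(c - 2 / (real k + 1)) * real ?P \<le> real (card (D \<inter> {1..?P}))"
      by linarith
    moreover have "0 < (k + 1) * (Ns k + 1)" by simp
    then have "real ?P > 0" using growth[of k] by linarith
    ultimately show ?thesis by (simp add: pos_le_divide_eq)
  qed
  have "(\<lambda>k. c - 2 / (real k + 1)) \<longlonglongrightarrow> c"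
    using tendsto_diff[OF tendsto_const tendsto_mult_right_zero[OF LIMSEQ_inverse_real_of_nat, of 2]]
    by (simp add: divide_inverse add.commute)
  then have "ereal c \<le> upper_dens D"
    using Ns_mono low by (intro upper_dens_ge_along_subseq[where s = "Ns \<circ> Suc"])
                     (auto simp: strict_mono_Suc_iff)
  then show ?thesis
    using finite_diff_blocks[of A Ns, OF decr Ns_mono] unfolding D_def by blast
qed

lemma open_card_gt:
  assumes "finite I" and "\<And>i. i \<in> I \<Longrightarrow> open (V i)"
  shows "open {x. r < real (card {i\<in>I. x \<in> V i})}"
proof -
  have "{x. r < real (card {i\<in>I. x \<in> V i})} =
        (\<Union>A\<in>{A. A \<subseteq> I \<and> r < real (card A)}. \<Inter>i\<in>A. V i)"
  proof (intro set_eqI iffI)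
    fix x assume "x \<in> {x. r < real (card {i\<in>I. x \<in> V i})}"
    then show "x \<in> (\<Union>A\<in>{A. A \<subseteq> I \<and> r < real (card A)}. \<Inter>i\<in>A. V i)"
      by (intro UN_I[of "{i\<in>I. x \<in> V i}"]) auto
  next
    fix x assume "x \<in> (\<Union>A\<in>{A. A \<subseteq> I \<and> r < real (card A)}. \<Inter>i\<in>A. V i)"
    then obtain A where A: "A \<subseteq> I" "r < real (card A)" "\<forall>i\<in>A. x \<in> V i" by auto
    have "card A \<le> card {i\<in>I. x \<in> V i}"
      using A assms(1) by (intro card_mono) auto
    then show "x \<in> {x. r < real (card {i\<in>I. x \<in> V i})}" using A by auto
  qed
  also have "open \<dots>"
    using assms by (intro open_UN ballI open_INT) (auto intro: finite_subset)
  finally show ?thesis .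
qed

lemma comeager_INT:
  fixes U :: "'i::countable \<Rightarrow> 'a::topological_space set"
  assumes "\<And>i. open (U i)" and "\<And>i. closure (U i) = UNIV"
  shows "comeager (\<Inter>i. U i)"
  unfolding comeager_def using assms by (intro exI[of _ "range U"]) auto

lemma scaled_orbit_dense:
  assumes "x0 \<in> HC T" and "a \<noteq> 0"
  shows "closure (range (\<lambda>m. a *\<^sub>R (T ^^ m) x0)) = UNIV"
proof -
  have "range (\<lambda>m. a *\<^sub>R (T ^^ m) x0) = (*\<^sub>R) a ` range (\<lambda>m. (T ^^ m) x0)"
    by (simp add: image_image)
  then have "closure (range (\<lambda>m. a *\<^sub>R (T ^^ m) x0)) = (*\<^sub>R) a ` UNIV"
    using assms(1) by (simp add: closure_scaleR[symmetric] HC_def)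
  also have "\<dots> = UNIV"
    using assms(2) by (auto intro!: image_eqI[of _ _ "inverse a *\<^sub>R _"])
  finally show ?thesis .
qed

definition frequently_small :: "('a::real_normed_vector \<Rightarrow> 'a) \<Rightarrow> real \<Rightarrow> real \<Rightarrow> nat \<Rightarrow> 'a set" where
  "frequently_small T r e M =
     {x. \<exists>N\<ge>M. r * real N < real (card (return_set T x (ball 0 e) \<inter> {1..N}))}"

lemma open_frequently_small:
  fixes T :: "'a::real_normed_vector \<Rightarrow> 'a"
  assumes "bounded_linear T"
  shows "open (frequently_small T r e M)"
proof -
  have "return_set T x (ball 0 e) \<inter> {1..N} = {i\<in>{1..N}. x \<in> (T ^^ i) -` ball 0 e}" for x N
    by (auto simp: return_set_def)
  then have "frequently_small T r e M =
      (\<Union>N\<in>{M..}. {x. r * real N < real (card {i\<in>{1..N}. x \<in> (T ^^ i) -` ball 0 e})})"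
    by (auto simp: frequently_small_def)
  also have "open \<dots>"
    using continuous_on_funpow[OF assms]
    by (intro open_UN ballI open_card_gt) (auto intro: open_vimage)
  finally show ?thesis .
qed

(* Returns of x to B_R after time m are returns of a T^m x to B(0,e) when a R < e, so
   up to the first m times the return set of x embeds into that of a T^m x. *)
lemma return_set_shift:
  fixes T :: "'a::real_normed_vector \<Rightarrow> 'a"
  assumes "linear T" and "0 < a" and "a * R < e"
  shows "card (return_set T x (cball 0 R) \<inter> {1..N + m})
           \<le> m + card (return_set T (a *\<^sub>R (T ^^ m) x) (ball 0 e) \<inter> {1..N})"
proof -
  let ?B = "return_set T (a *\<^sub>R (T ^^ m) x) (ball 0 e) \<inter> {1..N}"
  have "return_set T x (cball 0 R) \<inter> {m<..N + m} \<subseteq> (\<lambda>i. i + m) ` ?B"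
  proof
    fix j assume j: "j \<in> return_set T x (cball 0 R) \<inter> {m<..N + m}"
    have "(T ^^ (j - m)) ((T ^^ m) x) = (T ^^ (j - m + m)) x"
      by (simp add: funpow_add)
    also have "j - m + m = j" using j by simp
    finally have "norm ((T ^^ (j - m)) (a *\<^sub>R (T ^^ m) x)) = a * norm ((T ^^ j) x)"
      using assms(2) by (simp add: funpow_scaleR[OF assms(1)])
    also have "\<dots> \<le> a * R"
      using j assms(2) by (simp add: return_set_def)
    finally have "j - m \<in> ?B" using j assms(3) by (auto simp: return_set_def)
    then show "j \<in> (\<lambda>i. i + m) ` ?B" using j by (auto intro!: image_eqI[of _ _ "j - m"])
  qed
  then have "card (return_set T x (cball 0 R) \<inter> {1..N + m})
               \<le> m + card ((\<lambda>i. i + m) ` ?B \<inter> {1..N + m})"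
    by (rule card_initial_le_prefix)
  also have "card ((\<lambda>i. i + m) ` ?B \<inter> {1..N + m}) \<le> card ((\<lambda>i. i + m) ` ?B)"
    by (intro card_mono) auto
  also have "\<dots> \<le> card ?B"
    by (intro card_image_le) auto
  finally show ?thesis by simp
qed

(* The arithmetic behind step (2): the loss m is small against the length n. *)
lemma count_shift_arith:
  fixes c e n m r b :: real
  assumes "0 \<le> c" "e \<le> 1" "4 * m \<le> e * n" "0 \<le> m"
    "(c - e/2) * n < r" "r \<le> m + b"
  shows "(c - e) * (n - m) < b"
proof -
  have "(c - e) * (n - m) = (c - e/2) * n - (e * n) / 2 - (1 + c - e) * m + m"
    by (simp add: algebra_simps)
  moreover have "0 \<le> (1 + c - e) * m" using assms(1,2,4) by simp
  ultimately show ?thesis using assms(3,5,6) by linarith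
qed

(* Step (2), main case: the scaled orbit points a T^m x0 with a = e/(2R) lie in the set,
   choosing a time N' with a good return ratio for x0 and much larger than m. *)
lemma scaled_orbit_frequently_small:
  fixes T :: "'a::real_normed_vector \<Rightarrow> 'a"
  assumes lin: "linear T" and R: "0 < R" and e: "0 < e" "e \<le> 1" and c: "0 \<le> c"
    and dens: "ereal (c - e / 2) < upper_dens (return_set T x0 (cball 0 R))"
  shows "(e / (2 * R)) *\<^sub>R (T ^^ m) x0 \<in> frequently_small T (c - e) e M"
proof -
  define Rs where "Rs = return_set T x0 (cball 0 R)"
  define y where "y = (e / (2 * R)) *\<^sub>R (T ^^ m) x0"
  obtain N' where N': "N' \<ge> M + m + nat \<lceil>4 * m / e\<rceil> + 1"
    and freq: "ereal (c - e / 2) < ereal (real (card (Rs \<inter> {1..N'})) / real N')"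
    using less_limsup_frequently dens unfolding upper_dens_def Rs_def by blast
  define N where "N = N' - m"
  have "N' = N + m" "N \<ge> M" using N' by (auto simp: N_def)
  have "real N' > 0" using N' by simp
  then have count: "(c - e / 2) * real N' < real (card (Rs \<inter> {1..N'}))"
    using freq by (simp add: pos_less_divide_eq)
  have shift: "card (Rs \<inter> {1..N'}) \<le> m + card (return_set T y (ball 0 e) \<inter> {1..N})"
    unfolding Rs_def y_def \<open>N' = N + m\<close>
    using R e by (intro return_set_shift[OF lin]) auto
  have "4 * real m / e \<le> real N'" using N' by linarith
  then have long: "4 * real m \<le> e * real N'" using e by (simp add: field_simps)
  have "(c - e) * (real N' - real m) < real (card (return_set T y (ball 0 e) \<inter> {1..N}))"
    using c e long count shift by (intro count_shift_arith) auto
  then show ?thesis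
    using \<open>N \<ge> M\<close> \<open>N' = N + m\<close> unfolding frequently_small_def y_def by auto
qed

lemma dense_frequently_small:
  fixes T :: "'a::real_normed_vector \<Rightarrow> 'a"
  assumes "linear T" and "x0 \<in> HC T" and "0 < R" and "0 < e" "e \<le> 1" and "0 \<le> c"
    and "ereal (c - e / 2) < upper_dens (return_set T x0 (cball 0 R))"
  shows "closure (frequently_small T (c - e) e M) = UNIV"
proof -
  have "range (\<lambda>m. (e / (2 * R)) *\<^sub>R (T ^^ m) x0) \<subseteq> frequently_small T (c - e) e M"
    using scaled_orbit_frequently_small[OF assms(1,3-7)] by blast
  moreover have "closure (range (\<lambda>m. (e / (2 * R)) *\<^sub>R (T ^^ m) x0)) = UNIV"
    using assms by (intro scaled_orbit_dense) auto
  ultimately show ?thesis by (metis closure_mono top.extremum_uniqueI)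
qed

lemma dense_frequently_small_c_const:
  fixes T :: "'a::real_normed_vector \<Rightarrow> 'a"
  assumes "linear T" and "c_const T = ereal c" and "0 \<le> c" and "0 < e" "e \<le> 1"
  shows "closure (frequently_small T (c - e) e M) = UNIV"
proof -
  have "ereal (c - e / 2) < c_const T" using assms(2,4) by simp
  then obtain R x0 where "0 < R" "x0 \<in> HC T"
    "ereal (c - e / 2) < upper_dens (return_set T x0 (cball 0 R))"
    unfolding c_const_def less_SUP_iff by auto
  then show ?thesis using assms(1,3-5) by (intro dense_frequently_small) auto
qed

lemma finite_large_terms:
  fixes f :: "nat \<Rightarrow> 'a::real_normed_vector"
  assumes "\<And>k. finite (D - {i. norm (f i) < 1 / (real k + 1)})" and "0 < e"
  shows "finite {i\<in>D. e \<le> norm (f i)}"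
proof -
  obtain k where "inverse (real (Suc k)) < e" using reals_Archimedean[OF assms(2)] by blast
  then have "1 / (real k + 1) < e" by (simp add: inverse_eq_divide add.commute)
  then have "{i\<in>D. e \<le> norm (f i)} \<subseteq> D - {i. norm (f i) < 1 / (real k + 1)}" by auto
  then show ?thesis using assms(1) by (rule finite_subset)
qed

lemma tends_to_zero_along_set_of_density:
  fixes T :: "'a::real_normed_vector \<Rightarrow> 'a"
  assumes "\<And>k M. x \<in> frequently_small T (c - 1 / (real k + 1)) (1 / (real k + 1)) M"
  shows "\<exists>D. ereal c \<le> upper_dens D \<and> (\<forall>e>0. finite {i\<in>D. e \<le> norm ((T ^^ i) x)})"
proof -
  define A where "A k = {i. norm ((T ^^ i) x) < 1 / (real k + 1)}" for k
  have decr: "A (Suc k) \<subseteq> A k" for k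
  proof -
    have "1 / (real (Suc k) + 1) \<le> 1 / (real k + 1)" by (simp add: frac_le)
    then show ?thesis by (auto simp: A_def)
  qed
  have freq: "\<exists>N\<ge>M. (c - 1 / (real k + 1)) * real N < real (card (A k \<inter> {1..N}))" for k M
  proof -
    have "return_set T x (ball 0 (1 / (real k + 1))) \<inter> {1..N} = A k \<inter> {1..N}" for N
      by (auto simp: return_set_def A_def)
    then show ?thesis using assms[of k M] by (simp add: frequently_small_def)
  qed
  obtain D where "ereal c \<le> upper_dens D" and "\<And>k. finite (D - A k)"
    using diagonal_density[of A c, OF decr freq] by blast
  moreover have "finite {i\<in>D. e \<le> norm ((T ^^ i) x)}" if "0 < e" for e
    using finite_large_terms[OF _ that] \<open>\<And>k. finite (D - A k)\<close> unfolding A_def .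
  ultimately show ?thesis by blast
qed

theorem proposition4:
  fixes T :: "'a::banach \<Rightarrow> 'a"
  assumes "bounded_linear T"
    and "separable_space (euclidean :: 'a topology)"
    and "hypercyclic T"
    and "c_const T > 0"
  shows "\<exists>G. comeager G \<and>
    (\<forall>x\<in>G. \<exists>D::nat set. upper_dens D \<ge> c_const T \<and>
       (\<forall>e>0. finite {i\<in>D. norm ((T ^^ i) x) \<ge> e}))"
proof -
  have "c_const T \<le> 1"
    unfolding c_const_def by (intro SUP_least) (rule upper_dens_le_one)
  then obtain c where c: "c_const T = ereal c" "0 < c"
    using assms(4) by (cases "c_const T") auto
  define U where "U = (\<lambda>(k, M). frequently_small T (c - 1 / (real k + 1)) (1 / (real k + 1)) M)"
  have "comeager (\<Inter>i. U i)"
  proof (rule comeager_INT)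
    fix i show "open (U i)"
      using open_frequently_small[OF assms(1)] by (simp add: U_def split: prod.splits)
    show "closure (U i) = UNIV"
      using dense_frequently_small_c_const[OF bounded_linear.linear[OF assms(1)] c(1)] c(2)
      by (simp add: U_def split: prod.splits)
  qed
  moreover have "\<exists>D. ereal c \<le> upper_dens D \<and> (\<forall>e>0. finite {i\<in>D. e \<le> norm ((T ^^ i) x)})"
    if "x \<in> (\<Inter>i. U i)" for x
    using that by (intro tends_to_zero_along_set_of_density) (auto simp: U_def)
  ultimately show ?thesis using c(1) by auto
qed

end
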